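(* Let $V$ be a real vector space, $\kappa:\mathbb{R}\to\mathbb{R}$ a kernel and $f:\mathbb{R}\to\mathbb{R}$ an envelope, and assume all series below converge absolutely. Let $F$ be kernel interpolation, $Fx(t,\varphi)=\sum_{\tau\in\varphi}x(\tau)\kappa(t-\tau)$. Then the following are equivalent: (i) $\kappa$ preserves every translate of $f$ from its integer samples: for all $t,s\in\mathbb{R}$, $\sum_{k\in\mathbb{Z}} f(t+k)\,\kappa(s-k)=f(t+s)$; (ii) for every waveform $w:\mathbb{T}\to V$, the enveloped static wave $x(s)=f(s)\,w(c(s))$ satisfies $Fx(t,\varphi)=f(t)\,w(\varphi)$ for all $t\in\mathbb{R}$, $\varphi\in\mathbb{T}$.
   Context: $\mathbb{T}=\mathbb{R}/\mathbb{Z}$; $c:\mathbb{R}\to\mathbb{T}$, $c(p)=p+\mathbb{Z}$; an element $\varphi\in\mathbb{T}$ is regarded as the set of reals $\tau$ with $c(\tau)=\varphi$, and $\sum_{\tau\in\varphi}$ runs over all these $\tau$ (i.e. $\tau_0+k$, $k\in\mathbb{Z}$, for a representative $\tau_0$). *)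

theory Defs
  imports "HOL-Analysis.Analysis"
begin

definition int_diff_rel :: "real \<Rightarrow> real \<Rightarrow> bool" where
  "int_diff_rel x y \<longleftrightarrow> x - y \<in> \<int>"

lemma equivp_int_diff_rel: "equivp int_diff_rel"
proof (rule equivpI)
  show "reflp int_diff_rel" by (auto simp: reflp_def int_diff_rel_def)
  show "symp int_diff_rel"
  proof (rule sympI)
    fix x y assume "int_diff_rel x y"
    then have "- (x - y) \<in> \<int>" unfolding int_diff_rel_def by (rule Ints_minus)
    then show "int_diff_rel y x" unfolding int_diff_rel_def by simp
  qed
  show "transp int_diff_rel"
  proof (rule transpI)
    fix x y z assume "int_diff_rel x y" "int_diff_rel y z"
    then have "(x - y) + (y - z) \<in> \<int>" unfolding int_diff_rel_def by (rule Ints_add)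
    then show "int_diff_rel x z" unfolding int_diff_rel_def by simp
  qed
qed

quotient_type torus = real / int_diff_rel
  by (rule equivp_int_diff_rel)

definition c :: "real \<Rightarrow> torus" where
  "c p = abs_torus p"

definition kernel_interp ::
  "(real \<Rightarrow> real) \<Rightarrow> (real \<Rightarrow> 'v::real_normed_vector) \<Rightarrow> real \<Rightarrow> torus \<Rightarrow> 'v" where
  "kernel_interp \<kappa> x t \<phi> = (\<Sum>\<^sub>\<infinity>\<tau>\<in>{\<tau>. c \<tau> = \<phi>}. \<kappa> (t - \<tau>) *\<^sub>R x \<tau>)"

end

theory Submission
  imports Defs
begin

(* The fibre of c over c t0 is the lattice t0 + Z, so kernel interpolation at
   phi = c t0 is the series over k in Z of kappa(t - t0 - k) x(t0 + k).  For an enveloped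
   static wave x(s) = f(s) w(c s) the waveform factor w(c(t0 + k)) = w(c t0) is constant
   along the fibre and can be pulled out of the (absolutely convergent) series, giving
     F x (t0 + s, c t0) = (SUM k. f(t0 + k) kappa(s - k)) w(c t0).
   Hence (i) gives (ii) at once, and (ii) applied to a constant nonzero waveform gives (i). *)

lemma c_eq_iff: "c x = c y \<longleftrightarrow> x - y \<in> \<int>"
  unfolding c_def by (simp add: torus.abs_eq_iff int_diff_rel_def)

lemma c_surj: "\<exists>t. \<phi> = c t"
  unfolding c_def
  by (rule exI[of _ "rep_torus \<phi>"]) (simp add: Quotient3_abs_rep[OF Quotient3_torus])

lemma c_shift: "c (t0 + of_int k) = c t0"
  by (simp add: c_eq_iff)

lemma c_fibre: "{\<tau>. c \<tau> = c t0} = range (\<lambda>k::int. t0 + of_int k)"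
proof safe
  fix x assume "c x = c t0"
  then obtain k where "x - t0 = of_int k" by (auto simp: c_eq_iff elim: Ints_cases)
  then show "x \<in> range (\<lambda>k::int. t0 + of_int k)" by (intro image_eqI[of _ _ k]) auto
next
  fix k :: int show "c (t0 + of_int k) = c t0" by (rule c_shift)
qed

lemma kernel_interp_on_fibre:
  "kernel_interp \<kappa> x t (c t0) = (\<Sum>\<^sub>\<infinity>k::int. \<kappa> (t - (t0 + of_int k)) *\<^sub>R x (t0 + of_int k))"
proof -
  have "inj (\<lambda>k::int. t0 + of_int k)" by (auto simp: inj_def)
  then show ?thesis
    unfolding kernel_interp_def c_fibre by (subst infsum_reindex) (simp_all add: o_def)
qed

lemma kernel_interp_static_wave:
  fixes \<kappa> f :: "real \<Rightarrow> real" and w :: "torus \<Rightarrow> 'v::real_normed_vector"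
  assumes conv: "(\<lambda>k::int. \<bar>f (t0 + of_int k) * \<kappa> (s - of_int k)\<bar>) summable_on UNIV"
  shows "kernel_interp \<kappa> (\<lambda>s. f s *\<^sub>R w (c s)) (t0 + s) (c t0)
     = (\<Sum>\<^sub>\<infinity>k::int. f (t0 + of_int k) * \<kappa> (s - of_int k)) *\<^sub>R w (c t0)"
proof -
  have w_const: "w (c (t0 + of_int k)) = w (c t0)" for k :: int
    by (simp add: c_shift)
  have summable: "(\<lambda>k::int. f (t0 + of_int k) * \<kappa> (s - of_int k)) summable_on UNIV"
    by (rule summable_on_iff_abs_summable_on_real[THEN iffD2]) (simp only: real_norm_def conv)
  have "kernel_interp \<kappa> (\<lambda>s. f s *\<^sub>R w (c s)) (t0 + s) (c t0)
      = (\<Sum>\<^sub>\<infinity>k::int. (f (t0 + of_int k) * \<kappa> (s - of_int k)) *\<^sub>R w (c t0))"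
    unfolding kernel_interp_on_fibre by (intro infsum_cong) (simp add: w_const algebra_simps)
  also have "\<dots> = (\<Sum>\<^sub>\<infinity>k::int. f (t0 + of_int k) * \<kappa> (s - of_int k)) *\<^sub>R w (c t0)"
    using summable by (rule infsum_scaleR_left)
  finally show ?thesis .
qed

theorem mainTheorem4:
  fixes \<kappa> f :: "real \<Rightarrow> real"
  assumes nontriv: "\<exists>v::'v::real_normed_vector. v \<noteq> 0"
    and abs_conv: "\<And>t s. (\<lambda>k::int. \<bar>f (t + of_int k) * \<kappa> (s - of_int k)\<bar>) summable_on UNIV"
  shows "(\<forall>t s. (\<Sum>\<^sub>\<infinity>k::int. f (t + of_int k) * \<kappa> (s - of_int k)) = f (t + s))
     \<longleftrightarrow> (\<forall>(w::torus \<Rightarrow> 'v) t \<phi>.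
            kernel_interp \<kappa> (\<lambda>s. f s *\<^sub>R w (c s)) t \<phi> = f t *\<^sub>R w \<phi>)"
proof
  assume preserve: "\<forall>t s. (\<Sum>\<^sub>\<infinity>k::int. f (t + of_int k) * \<kappa> (s - of_int k)) = f (t + s)"
  show "\<forall>(w::torus \<Rightarrow> 'v) t \<phi>. kernel_interp \<kappa> (\<lambda>s. f s *\<^sub>R w (c s)) t \<phi> = f t *\<^sub>R w \<phi>"
  proof (intro allI)
    fix w :: "torus \<Rightarrow> 'v" and t \<phi>
    obtain t0 where \<phi>: "\<phi> = c t0" using c_surj by blast
    have t: "t = t0 + (t - t0)" by simp
    show "kernel_interp \<kappa> (\<lambda>s. f s *\<^sub>R w (c s)) t \<phi> = f t *\<^sub>R w \<phi>"
      using kernel_interp_static_wave[OF abs_conv[of t0 "t - t0"], of w]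
        preserve[rule_format, of t0 "t - t0"] unfolding \<phi> by (simp only: flip: t)
  qed
next
  assume static: "\<forall>(w::torus \<Rightarrow> 'v) t \<phi>. kernel_interp \<kappa> (\<lambda>s. f s *\<^sub>R w (c s)) t \<phi> = f t *\<^sub>R w \<phi>"
  obtain v :: 'v where "v \<noteq> 0" using nontriv by blast
  show "\<forall>t s. (\<Sum>\<^sub>\<infinity>k::int. f (t + of_int k) * \<kappa> (s - of_int k)) = f (t + s)"
  proof (intro allI)
    fix t s
    have "(\<Sum>\<^sub>\<infinity>k::int. f (t + of_int k) * \<kappa> (s - of_int k)) *\<^sub>R v
        = kernel_interp \<kappa> (\<lambda>s. f s *\<^sub>R v) (t + s) (c t)"
      by (rule kernel_interp_static_wave[OF abs_conv[of t s], symmetric])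
    also have "\<dots> = f (t + s) *\<^sub>R v"
      by (rule static[rule_format, of "\<lambda>_. v"])
    finally have "(\<Sum>\<^sub>\<infinity>k::int. f (t + of_int k) * \<kappa> (s - of_int k)) *\<^sub>R v = f (t + s) *\<^sub>R v" .
    with \<open>v \<noteq> 0\<close> show "(\<Sum>\<^sub>\<infinity>k::int. f (t + of_int k) * \<kappa> (s - of_int k)) = f (t + s)"
      by (simp only: scaleR_cancel_right) blast
  qed
qed

end
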